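(* Let $A$, $c$, $d$ be positive integers such that $A^2 - 2cA - d$ is the square of an integer. Then $2A \leq (c+1)^2 + d$. *)

theory Defs
  imports Main
begin

end

theory Submission
  imports Defs
begin

text \<open>If \<open>A\<^sup>2 - 2cA - d = k\<^sup>2\<close>, then \<open>c\<^sup>2 + d = (A - c - k)(A - c + k)\<close> is a
  factorisation of a positive integer into two factors with sum \<open>2(A - c)\<close>. Two integers
  with positive product have sum at most the product plus one, since \<open>(m - 1)(n - 1) \<ge> 0\<close> when
  both are positive; hence \<open>2A - 2c \<le> c\<^sup>2 + d + 1\<close>.\<close>

lemma add_le_mult_plus_one_if_mult_pos:
  fixes m n :: int
  assumes "0 < m * n"
  shows "m + n \<le> m * n + 1"
proof -
  consider "0 < m" "0 < n" | "m < 0" "n < 0"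
    using assms by (auto simp: zero_less_mult_iff)
  then show ?thesis
  proof cases
    case 1
    then have "0 \<le> (m - 1) * (n - 1)" by simp
    then show ?thesis by (simp add: algebra_simps)
  next
    case 2
    then show ?thesis using assms by linarith
  qed
qed

theorem lemma4:
  fixes A c d :: int
  assumes "A > 0" and "c > 0" and "d > 0"
    and "\<exists>k::int. A^2 - 2*c*A - d = k^2"
  shows "2*A \<le> (c+1)^2 + d"
proof -
  obtain k where k: "A^2 - 2*c*A - d = k^2"
    using assms(4) by blast
  have factorisation: "(A - c - k) * (A - c + k) = c^2 + d"
    using k by algebra
  have "0 < c^2 + d"
    using assms(3) by (simp add: add_nonneg_pos)
  then have "(A - c - k) + (A - c + k) \<le> c^2 + d + 1"
    using add_le_mult_plus_one_if_mult_pos factorisation by metis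
  then show ?thesis
    by (simp add: power2_eq_square algebra_simps)
qed

end
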